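(* Let $\kappa\ge2$ be an integer, $\Delta>0$ and $a\in\mathbb R$. Then \[\sum_{m=-\infty}^{\infty}\frac1{((m+a)^2+\Delta^2)^{\kappa/2}}\le\frac{\kappa+\Delta}{\Delta}\int_{\mathbb R}\frac{dx}{(x^2+\Delta^2)^{\kappa/2}}.\] *)

theory Defs
  imports "HOL-Analysis.Analysis"
begin

end

theory Submission
  imports Defs "HOL-Probability.Sinc_Integral"
begin

text \<open>
  The summand is \<open>f (m + a)\<close> for an integrable \<open>f \<ge> 0\<close> that is even and decreasing in \<open>\<bar>x\<bar>\<close>.
  Every sample point \<open>t \<ge> 1\<close> is dominated by the integral of \<open>f\<close> over \<open>[t - 1, t]\<close>, every
  \<open>t \<le> -1\<close> by the integral over \<open>[t, t + 1]\<close>; these unit intervals overlap only in endpoints,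
  and at most two sample points lie in \<open>(-1, 1)\<close>. Hence the sum is at most
  \<open>\<integral>f + 2 f(0)\<close>. Finally \<open>\<integral>f \<ge> 2c f(c)\<close> for every \<open>c \<ge> 0\<close>, and the choice
  \<open>c = \<Delta>/\<surd>(\<kappa>-1)\<close> turns \<open>2 f(0) \<le> (\<kappa>/\<Delta>) 2c f(c)\<close> into \<open>(1 + 1/n)\<^sup>n \<le> n + 1\<close> with \<open>n = \<kappa> - 1\<close>.
\<close>

locale decreasing_in_abs =
  fixes f :: "real \<Rightarrow> real"
  assumes nonneg: "0 \<le> f x"
    and antimono_abs: "\<bar>x\<bar> \<le> \<bar>y\<bar> \<Longrightarrow> f y \<le> f x"
    and integrable: "f integrable_on UNIV"
begin

lemma integrable_interval: "f integrable_on {u..v}"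
  using integrable_on_subinterval[OF integrable] by simp

lemma integral_interval_le: "integral {u..v} f \<le> integral UNIV f"
  by (rule integral_subset_le) (use integrable_interval integrable nonneg in auto)

lemma length_mult_le_integral:
  assumes "u \<le> v" and "\<And>x. x \<in> {u..v} \<Longrightarrow> c \<le> f x"
  shows "(v - u) * c \<le> integral {u..v} f"
proof -
  have "integral {u..v} (\<lambda>x. c) \<le> integral {u..v} f"
    by (rule integral_le) (use assms integrable_interval in auto)
  then show ?thesis using assms by simp
qed

lemma le_integral_left_cell:
  assumes "1 \<le> t" shows "f t \<le> integral {t - 1..t} f"
  using length_mult_le_integral[of "t - 1" t "f t"] assms by (force intro!: antimono_abs)

lemma le_integral_right_cell:
  assumes "t \<le> -1" shows "f t \<le> integral {t..t + 1} f"
  using length_mult_le_integral[of t "t + 1" "f t"] assms by (force intro!: antimono_abs)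

lemma two_mult_le_integral:
  assumes "0 \<le> c" shows "2 * c * f c \<le> integral UNIV f"
proof -
  have "(c - -c) * f c \<le> integral {-c..c} f"
    using assms by (intro length_mult_le_integral) (auto intro!: antimono_abs)
  then show ?thesis using integral_interval_le[of "-c" c] by simp
qed

lemma sum_integral_unit_cells_le:
  fixes S :: "int set" and a :: real
  assumes "finite S"
  shows "(\<Sum>m\<in>S. integral {of_int m + a - 1..of_int m + a} f) \<le> integral UNIV f"
proof -
  let ?cell = "\<lambda>m::int. {of_int m + a - 1..of_int m + a}"
  have "(f has_integral (\<Sum>m\<in>S. integral (?cell m) f)) (\<Union>m\<in>S. ?cell m)"
  proof (rule has_integral_UN)
    show "pairwise (\<lambda>m m'. negligible (?cell m \<inter> ?cell m')) S"
    proof (rule pairwiseI)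
      fix m m' :: int assume "m \<noteq> m'"
      then have "?cell m \<inter> ?cell m' \<subseteq> {of_int m + a, of_int m' + a}"
        by (cases "m < m'") (auto dest: of_int_less_iff[where 'a=real, THEN iffD2])
      then show "negligible (?cell m \<inter> ?cell m')"
        by (rule negligible_subset[rotated]) auto
    qed
  qed (use assms integrable_interval in auto)
  then have "(\<Sum>m\<in>S. integral (?cell m) f) = integral (\<Union>m\<in>S. ?cell m) f"
    by (rule integral_unique[symmetric])
  also have "\<dots> \<le> integral UNIV f"
    by (rule integral_subset_le) (use integrable nonneg
        \<open>(f has_integral _) (\<Union>m\<in>S. ?cell m)\<close> in auto)
  finally show ?thesis .
qed

lemma sum_shifted_int_le:
  fixes F :: "int set" and a :: real
  assumes "finite F"
  shows "(\<Sum>m\<in>F. f (of_int m + a)) \<le> integral UNIV f + 2 * f 0"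
proof -
  define cell where "cell m = integral {of_int m + a - 1..of_int m + a} f" for m :: int
  define P where "P = {m\<in>F. 1 \<le> of_int m + a}"
  define Q where "Q = {m\<in>F. of_int m + a \<le> -1}"
  define R where "R = {m\<in>F. \<bar>of_int m + a\<bar> < 1}"
  have fin: "finite P" "finite Q" "finite R"
    using assms by (auto simp: P_def Q_def R_def)
  have F: "F = P \<union> Q \<union> R" by (auto simp: P_def Q_def R_def)
  have split: "(\<Sum>m\<in>F. f (of_int m + a))
      = (\<Sum>m\<in>P. f (of_int m + a)) + (\<Sum>m\<in>Q. f (of_int m + a)) + (\<Sum>m\<in>R. f (of_int m + a))"
    unfolding F using fin
    by (subst sum.union_disjoint; (auto simp: P_def Q_def R_def)[])+
  have "(\<Sum>m\<in>P. f (of_int m + a)) \<le> sum cell P"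
    by (rule sum_mono) (auto simp: P_def cell_def intro!: le_integral_left_cell)
  moreover have "(\<Sum>m\<in>Q. f (of_int m + a)) \<le> (\<Sum>m\<in>Q. cell (m + 1))"
    by (rule sum_mono) (auto simp: Q_def cell_def algebra_simps
        dest: le_integral_right_cell)
  moreover have "(\<Sum>m\<in>Q. cell (m + 1)) = sum cell ((\<lambda>m. m + 1) ` Q)"
    by (simp add: sum.reindex)
  moreover have "sum cell P + sum cell ((\<lambda>m. m + 1) ` Q) \<le> integral UNIV f"
  proof -
    have "P \<inter> (\<lambda>m. m + 1) ` Q = {}" by (auto simp: P_def Q_def)
    then have "sum cell P + sum cell ((\<lambda>m. m + 1) ` Q) = sum cell (P \<union> (\<lambda>m. m + 1) ` Q)"
      using fin by (simp add: sum.union_disjoint)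
    then show ?thesis
      unfolding cell_def using fin by (simp add: sum_integral_unit_cells_le)
  qed
  moreover have "(\<Sum>m\<in>R. f (of_int m + a)) \<le> 2 * f 0"
  proof -
    have "R \<subseteq> {\<lfloor>-a\<rfloor>, \<lfloor>-a\<rfloor> + 1}"
    proof
      fix m assume "m \<in> R"
      then have "-a < of_int (m + 1)" "of_int (m - 1) \<le> -a"
        by (auto simp: R_def abs_less_iff)
      then have "\<lfloor>-a\<rfloor> < m + 1" "m - 1 \<le> \<lfloor>-a\<rfloor>"
        by (simp_all only: floor_less_iff le_floor_iff)
      then show "m \<in> {\<lfloor>-a\<rfloor>, \<lfloor>-a\<rfloor> + 1}" by auto
    qed
    then have "card R \<le> 2"
      using card_mono[of "{\<lfloor>-a\<rfloor>, \<lfloor>-a\<rfloor> + 1}" R] by (auto simp: card_insert_if)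
    have "(\<Sum>m\<in>R. f (of_int m + a)) \<le> (\<Sum>m\<in>R. f 0)"
      by (rule sum_mono) (simp add: antimono_abs)
    also have "\<dots> \<le> 2 * f 0"
      using \<open>card R \<le> 2\<close> nonneg[of 0] by (simp add: mult_right_mono)
    finally show ?thesis .
  qed
  ultimately show ?thesis using split by linarith
qed

lemma infsum_shifted_int_le:
  fixes a :: real
  shows "(\<Sum>\<^sub>\<infinity>m\<in>(UNIV::int set). f (of_int m + a)) \<le> integral UNIV f + 2 * f 0"
proof (rule infsum_le_finite_sums)
  show "(\<lambda>m::int. f (of_int m + a)) summable_on UNIV"
    by (rule nonneg_bdd_above_summable_on)
      (auto simp: nonneg intro!: bdd_aboveI sum_shifted_int_le)
qed (rule sum_shifted_int_le)

end

lemma integrable_lborel_inverse_1_plus_square: "integrable lborel (\<lambda>x::real. inverse (1 + x\<^sup>2))"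
  using integrable_inverse_1_plus_square unfolding set_integrable_def
  by (simp add: einterval_iff)

lemma inverse_powr_square_plus_le:
  fixes p D x :: real
  assumes "1 \<le> p" "0 < D"
  shows "1 / (x\<^sup>2 + D) powr p \<le> 1 / (min 1 D * D powr (p - 1)) * inverse (1 + x\<^sup>2)"
proof -
  have base_pos: "0 < x\<^sup>2 + D" using assms by (simp add: add_nonneg_pos)
  have "min 1 D * (1 + x\<^sup>2) * D powr (p - 1) \<le> (x\<^sup>2 + D) * (x\<^sup>2 + D) powr (p - 1)"
  proof (rule mult_mono)
    show "min 1 D * (1 + x\<^sup>2) \<le> x\<^sup>2 + D"
      using mult_right_mono[of D 1 "x\<^sup>2"] by (cases "D \<le> 1") (auto simp: min_def algebra_simps)
    show "D powr (p - 1) \<le> (x\<^sup>2 + D) powr (p - 1)"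
      using assms by (intro powr_mono2) auto
  qed (use assms in auto)
  also have "\<dots> = (x\<^sup>2 + D) powr p"
    using assms by (simp add: powr_diff add_pos_nonneg)
  finally have "min 1 D * (1 + x\<^sup>2) * D powr (p - 1) \<le> (x\<^sup>2 + D) powr p" .
  then have "1 / (x\<^sup>2 + D) powr p \<le> 1 / (min 1 D * (1 + x\<^sup>2) * D powr (p - 1))"
    using assms base_pos by (intro divide_left_mono) (auto intro!: mult_pos_pos add_pos_nonneg)
  then show ?thesis by (simp add: field_simps)
qed

lemma integrable_on_inverse_powr_square_plus:
  fixes p D :: real
  assumes "1 \<le> p" "0 < D"
  shows "(\<lambda>x::real. 1 / (x\<^sup>2 + D) powr p) integrable_on UNIV"
proof (rule integrable_on_lborel, rule Bochner_Integration.integrable_bound)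
  show "integrable lborel (\<lambda>x. 1 / (min 1 D * D powr (p - 1)) * inverse (1 + x\<^sup>2))"
    using integrable_lborel_inverse_1_plus_square by simp
  show "AE x in lborel. norm (1 / (x\<^sup>2 + D) powr p)
          \<le> norm (1 / (min 1 D * D powr (p - 1)) * inverse (1 + x\<^sup>2))"
    using inverse_powr_square_plus_le[OF assms] assms by (auto simp: add_pos_nonneg)
qed measurable

lemma decreasing_in_abs_inverse_powr_square_plus:
  fixes p D :: real
  assumes "1 \<le> p" "0 < D"
  shows "decreasing_in_abs (\<lambda>x. 1 / (x\<^sup>2 + D) powr p)"
proof
  fix x y :: real
  assume "\<bar>x\<bar> \<le> \<bar>y\<bar>"
  then have "x\<^sup>2 \<le> y\<^sup>2" by (simp add: abs_le_square_iff)
  then show "1 / (y\<^sup>2 + D) powr p \<le> 1 / (x\<^sup>2 + D) powr p"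
    using assms add_nonneg_pos[OF zero_le_power2, of D x] add_nonneg_pos[OF zero_le_power2, of D y]
    by (intro divide_left_mono powr_mono2 mult_pos_pos) auto
qed (use assms integrable_on_inverse_powr_square_plus in auto)

lemma one_plus_inverse_power_le:
  assumes "1 \<le> n"
  shows "(1 + 1 / real n) ^ n \<le> real n + 1"
proof (cases "n = 1")
  case False
  have "(1 + 1 / real n) ^ n \<le> exp 1"
    using assms by (intro exp_ge_one_plus_x_over_n_power_n) auto
  also have "\<dots> \<le> 3" by (rule exp_le)
  finally show ?thesis using assms False by simp
qed simp

lemma powr_half_le_at_witness:
  fixes \<kappa> :: nat and \<Delta> :: real
  assumes "2 \<le> \<kappa>" "0 < \<Delta>"
  defines "c \<equiv> \<Delta> / sqrt (real \<kappa> - 1)"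
  shows "(c\<^sup>2 + \<Delta>\<^sup>2) powr (real \<kappa> / 2) \<le> real \<kappa> * c * \<Delta> ^ (\<kappa> - 1)"
proof -
  define n where "n = \<kappa> - 1"
  have \<kappa>: "\<kappa> = n + 1" and n: "1 \<le> n"
    using assms(1) by (simp_all add: n_def)
  have c2: "c\<^sup>2 = \<Delta>\<^sup>2 / real n"
    using n by (simp add: c_def \<kappa> power_divide)
  define s where "s = c\<^sup>2 + \<Delta>\<^sup>2"
  have s: "s = \<Delta>\<^sup>2 * (1 + 1 / real n)"
    using n by (simp add: s_def c2 field_simps)
  then have "0 < s" using assms by (simp add: add_pos_nonneg)
  from s have "s ^ \<kappa> = (\<Delta>\<^sup>2) ^ \<kappa> * ((1 + 1 / real n) ^ n * (1 + 1 / real n))"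
    by (simp add: \<kappa> power_mult_distrib)
  also have "\<dots> \<le> (\<Delta>\<^sup>2) ^ \<kappa> * ((real n + 1) * (1 + 1 / real n))"
    using one_plus_inverse_power_le[OF n] by (intro mult_left_mono mult_right_mono) auto
  also have "\<dots> = (real n + 1)\<^sup>2 * (\<Delta>\<^sup>2 / real n) * (\<Delta>\<^sup>2) ^ n"
    using n by (simp add: \<kappa> field_simps power2_eq_square)
  also have "\<dots> = (real n + 1)\<^sup>2 * c\<^sup>2 * (\<Delta>\<^sup>2) ^ n"
    by (simp only: c2)
  also have "\<dots> = (real \<kappa> * c * \<Delta> ^ (\<kappa> - 1))\<^sup>2"
    by (simp add: \<kappa> power_mult_distrib flip: power_mult power_mult_numeral)
      (simp add: mult.commute power_mult)
  finally have "s ^ \<kappa> \<le> (real \<kappa> * c * \<Delta> ^ (\<kappa> - 1))\<^sup>2" .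
  moreover have "0 \<le> real \<kappa> * c * \<Delta> ^ (\<kappa> - 1)"
    using assms by (simp add: c_def)
  ultimately have "sqrt (s ^ \<kappa>) \<le> real \<kappa> * c * \<Delta> ^ (\<kappa> - 1)"
    by (rule real_le_lsqrt[rotated])
  moreover have "s powr (real \<kappa> / 2) = sqrt (s ^ \<kappa>)"
    using \<open>0 < s\<close> by (simp add: powr_half_sqrt_powr powr_realpow)
  ultimately show ?thesis by (simp add: s_def)
qed

lemma two_div_power_le_at_witness:
  fixes \<kappa> :: nat and \<Delta> :: real
  assumes "2 \<le> \<kappa>" "0 < \<Delta>"
  defines "c \<equiv> \<Delta> / sqrt (real \<kappa> - 1)"
  shows "2 / \<Delta> ^ \<kappa> \<le> real \<kappa> / \<Delta> * (2 * c * (1 / (c\<^sup>2 + \<Delta>\<^sup>2) powr (real \<kappa> / 2)))"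
proof -
  have "0 < c" using assms by (simp add: c_def)
  have "2 / \<Delta> ^ \<kappa> = real \<kappa> / \<Delta> * (2 * c * (1 / (real \<kappa> * c * \<Delta> ^ (\<kappa> - 1))))"
    using assms \<open>0 < c\<close> by (simp add: field_simps power_eq_if)
  also have "\<dots> \<le> real \<kappa> / \<Delta> * (2 * c * (1 / (c\<^sup>2 + \<Delta>\<^sup>2) powr (real \<kappa> / 2)))"
    using assms \<open>0 < c\<close> powr_half_le_at_witness[OF assms(1,2)]
    by (intro mult_left_mono divide_left_mono) (auto simp: c_def add_pos_nonneg)
  finally show ?thesis .
qed

theorem lemmaB2:
  fixes \<kappa> :: nat and \<Delta> a :: real
  assumes "\<kappa> \<ge> 2" and "\<Delta> > 0"
  shows "(\<Sum>\<^sub>\<infinity>m\<in>(UNIV::int set). 1 / (((real_of_int m + a)^2 + \<Delta>^2) powr (real \<kappa> / 2)))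
           \<le> (real \<kappa> + \<Delta>) / \<Delta> * integral UNIV (\<lambda>x::real. 1 / ((x^2 + \<Delta>^2) powr (real \<kappa> / 2)))"
proof -
  define f where "f x = 1 / (x\<^sup>2 + \<Delta>\<^sup>2) powr (real \<kappa> / 2)" for x :: real
  interpret decreasing_in_abs f
    unfolding f_def[abs_def] using assms
    by (intro decreasing_in_abs_inverse_powr_square_plus) auto
  define c where "c = \<Delta> / sqrt (real \<kappa> - 1)"
  have "f 0 = 1 / \<Delta> ^ \<kappa>"
    using assms by (simp add: f_def powr_half_sqrt_powr powr_realpow flip: power_mult)
      (simp add: power_even_eq)
  then have "2 * f 0 \<le> real \<kappa> / \<Delta> * (2 * c * f c)"
    using two_div_power_le_at_witness[OF assms] by (simp add: f_def c_def)
  also have "\<dots> \<le> real \<kappa> / \<Delta> * integral UNIV f"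
    using assms by (intro mult_left_mono two_mult_le_integral) (auto simp: c_def)
  finally have "(\<Sum>\<^sub>\<infinity>m\<in>(UNIV::int set). f (of_int m + a))
      \<le> integral UNIV f + real \<kappa> / \<Delta> * integral UNIV f"
    using infsum_shifted_int_le[of a] by linarith
  also have "\<dots> = (real \<kappa> + \<Delta>) / \<Delta> * integral UNIV f"
    using assms by (simp add: field_simps)
  finally show ?thesis by (simp add: f_def[abs_def])
qed

end
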